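(* Let $p$ be a prime with $p \equiv \pm 3 \pmod 8$. Then $2p$ is not $\pi/4$-congruent.
   Context: A positive integer $n$ is called $\pi/4$-congruent if there exist positive rationals $a,b,c$ such that the triangle with sides $a$, $b\sqrt 2$, $c$ has angle $\pi/4$ opposite the side $c$ and area $n$; equivalently $ab = 2n$ and $c^2 = a^2 + 2b^2 - 2ab$. *)

theory Defs
  imports Complex_Main "HOL-Computational_Algebra.Primes"
begin

text \<open>A positive integer n is pi/4-congruent if there are positive rationals a, b, c
with a b = 2 n and c^2 = a^2 + 2 b^2 - 2 a b (triangle with sides a, b sqrt 2, c,
angle pi/4 opposite c, area n).\<close>
definition pi4_congruent :: "nat \<Rightarrow> bool" where
  "pi4_congruent n \<longleftrightarrow> (\<exists>a b c :: rat. a > 0 \<and> b > 0 \<and> c > 0 \<and>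
      a * b = 2 * of_nat n \<and> c ^ 2 = a ^ 2 + 2 * b ^ 2 - 2 * a * b)"

end

theory Submission
  imports
    Defs
    "HOL-Number_Theory.Number_Theory"
    "HOL-Computational_Algebra.Nth_Powers"
    "HOL-Computational_Algebra.Polynomial"
begin

(* Writing b = R/S in lowest terms, the triangle condition becomes the integral equation
   M^2 = 16 p^2 S^4 - 8 p R^2 S^2 + 2 R^4.  Because 2 is a quadratic non-residue modulo p,
   this forces R = 2 p r and M = 4 p z with a primitive solution of
     z^2 = s^4 - 2 p r^2 s^2 + 2 p^2 r^4      (s odd and prime to p r).
   Then (s^2 - p r^2, p r^2, |z|) is a primitive Pythagorean triple, and splitting the coprime
   factors of z^2 - (s^2 - p r^2)^2 = p^2 r^4 into fourth powers shows: r cannot be odd (by the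
   non-residuosity of 2 or -2, or modulo 16), and for even r one either reaches a contradiction
   (modulo 4, modulo 8, or again from the non-residuosity of 2) or finds a primitive solution
   with smaller |r|.  Infinite descent concludes. *)

section \<open>Quadratic residues\<close>

lemma not_QuadRes_2:
  fixes P :: int
  assumes "prime P" and P_mod_8: "P mod 8 = 3 \<or> P mod 8 = 5"
  shows "\<not> QuadRes P 2"
proof -
  define p where "p = nat P"
  have P: "P = int p" using \<open>prime P\<close> by (simp add: p_def prime_ge_0_int)
  have p: "prime p" using \<open>prime P\<close> by (simp add: P)
  have "2 < p" using P_mod_8 prime_ge_2_int[OF \<open>prime P\<close>] unfolding P by presburger
  then interpret GAUSS p 2
    by unfold_locales (use p P P_mod_8 in \<open>auto simp: cong_def\<close>)
  define h where "h = (P - 1) div 2"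
  have "E = (\<lambda>x. 2 * x) ` {h div 2 <.. h}"
  proof -
    have "C = (\<lambda>x. x * 2) ` A"
      unfolding C_def B_def image_image A_def
      by (rule image_cong) (auto simp: h_def P)
    then show ?thesis unfolding E_def A_def h_def P
      by (auto simp: image_iff)
  qed
  then have "card E = nat (h - h div 2)"
    by (simp add: card_image inj_on_def)
  moreover have "h - h div 2 = 2 * (P div 8) + 1"
    using P_mod_8 unfolding h_def by presburger
  ultimately have "odd (card E)"
    using prime_ge_0_int[OF \<open>prime P\<close>] by (simp add: even_nat_iff)
  then have "Legendre 2 P = -1" using gauss_lemma by (simp add: P)
  then show ?thesis unfolding Legendre_def by (auto split: if_splits)
qed

lemma QuadRes_minus_1:
  fixes P :: int
  assumes "prime P" and P_mod_4: "P mod 4 = 1"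
  shows "QuadRes P (-1)"
proof (rule ccontr)
  define p where "p = nat P"
  have P: "P = int p" using \<open>prime P\<close> by (simp add: p_def prime_ge_0_int)
  have p: "prime p" using \<open>prime P\<close> by (simp add: P)
  have "2 < p" using P_mod_4 prime_ge_2_int[OF \<open>prime P\<close>] unfolding P by presburger
  assume "\<not> QuadRes P (-1)"
  then have "Legendre (-1) P = -1"
    using \<open>prime P\<close> by (auto simp: Legendre_def cong_0_iff)
  moreover have "[Legendre (-1) p = (-1) ^ ((p - 1) div 2)] (mod p)"
    using euler_criterion[OF p \<open>2 < p\<close>] by simp
  moreover have "even ((p - 1) div 2)" using P_mod_4 unfolding P by presburger
  ultimately have "[-1 = 1] (mod P)" by (simp add: P)
  then have "P dvd 2" by (simp add: cong_iff_dvd_diff)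
  with \<open>2 < p\<close> show False by (auto dest: zdvd_imp_le simp: P)
qed

lemma QuadRes_mult:
  assumes "QuadRes m a" and "QuadRes m b"
  shows "QuadRes m (a * b)"
proof -
  obtain x y where "[x^2 = a] (mod m)" and "[y^2 = b] (mod m)"
    using assms unfolding QuadRes_def by blast
  then have "[(x * y)^2 = a * b] (mod m)"
    unfolding power_mult_distrib by (rule cong_mult)
  then show ?thesis unfolding QuadRes_def by blast
qed

lemma not_QuadRes_minus_2:
  fixes P :: int
  assumes "prime P" and P_mod_8: "P mod 8 = 5"
  shows "\<not> QuadRes P (-2)"
proof
  assume "QuadRes P (-2)"
  moreover have "QuadRes P (-1)" using P_mod_8 by (intro QuadRes_minus_1[OF \<open>prime P\<close>]) presburger
  ultimately have "QuadRes P (-2 * -1)" by (rule QuadRes_mult)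
  then show False using not_QuadRes_2[OF \<open>prime P\<close>] P_mod_8 by simp
qed

lemma dvd_if_dvd_square_sub_nonres_square:
  fixes p x y a :: int
  assumes p: "prime p" and nonres: "\<not> QuadRes p a" and dvd: "p dvd x^2 - a * y^2"
  shows "p dvd y"
proof (rule ccontr)
  assume "\<not> p dvd y"
  then have "coprime y p" using p by (simp add: prime_imp_coprime coprime_commute)
  then obtain u where u: "[y * u = 1] (mod p)" using cong_solve_coprime_int by blast
  have "[x^2 = a * y^2] (mod p)" using dvd by (simp add: cong_iff_dvd_diff)
  then have "[(x * u)^2 = a * (y * u)^2] (mod p)"
    unfolding power_mult_distrib by (metis cong_scalar_right mult.assoc)
  also have "[a * (y * u)^2 = a * 1^2] (mod p)" using u by (intro cong_mult cong_pow) auto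
  finally show False using nonres unfolding QuadRes_def by auto
qed

section \<open>Congruences modulo powers of 2\<close>

lemma odd_square_mod_8:
  fixes x :: int
  assumes "odd x"
  shows "x^2 mod 8 = 1"
proof -
  obtain m where x: "x = 2 * m + 1" using assms by (rule oddE)
  obtain j where "m * (m + 1) = 2 * j" by (metis evenE even_mult_iff even_plus_one_iff)
  moreover have "x^2 = 4 * (m * (m + 1)) + 1" unfolding x by (simp add: algebra_simps power2_eq_square)
  ultimately show ?thesis by presburger
qed

lemma odd_power_4_mod_16:
  fixes x :: int
  assumes "odd x"
  shows "x^4 mod 16 = 1"
proof -
  have "8 dvd x^2 - 1" using odd_square_mod_8[OF assms] by presburger
  moreover have "2 dvd x^2 + 1" using assms by simp
  ultimately have "8 * 2 dvd (x^2 - 1) * (x^2 + 1)" by (rule mult_dvd_mono)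
  moreover have "(x^2 - 1) * (x^2 + 1) = x^4 - 1" by (simp add: algebra_simps power2_eq_square power4_eq_xxxx)
  ultimately show ?thesis by presburger
qed

lemma not_4_dvd_odd_square_add_square:
  fixes s y :: int
  assumes "odd s"
  shows "\<not> 4 dvd s^2 + y^2"
proof -
  have "s^2 mod 8 = 1" using odd_square_mod_8[OF assms] .
  moreover have "4 dvd y^2 \<or> y^2 mod 8 = 1"
    by (cases "even y") (auto elim!: evenE simp: odd_square_mod_8)
  ultimately show ?thesis by presburger
qed

lemma even_if_square_eq_8_mult_add_2_power_4:
  fixes M K R :: int
  assumes "M^2 = 8 * K + 2 * R^4"
  shows "even R"
proof (rule ccontr)
  assume "odd R"
  then have "R^4 = 16 * (R^4 div 16) + 1"
    using odd_power_4_mod_16[of R] div_mult_mod_eq[of "R^4" 16] by simp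
  then have M2: "M^2 = 2 * (4 * (K + 4 * (R^4 div 16)) + 1)" using assms by simp
  then have "even M" by (metis even_mult_iff even_power dvd_triv_left zero_less_numeral)
  then obtain m where "M = 2 * m" ..
  with M2 have "2 * m^2 = 4 * (K + 4 * (R^4 div 16)) + 1" by (simp add: power_mult_distrib)
  then show False by presburger
qed

lemma mod_8_obstruction:
  fixes P b g d :: int
  assumes "odd b" and P_mod_8: "P mod 8 = 3 \<or> P mod 8 = 5"
  shows "P * b^2 + 2 * g^2 * d^2 \<noteq> 2 * g^4 + d^4"
proof
  assume "P * b^2 + 2 * g^2 * d^2 = 2 * g^4 + d^4"
  then have eq: "P * b^2 = d^4 + 2 * (g^2 * (g^2 - d^2))" by Groebner_Basis.algebra
  have "odd (P * b^2)" using assms by presburger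
  then have "odd d" using eq by simp
  have "4 dvd g^2 * (g^2 - d^2)"
  proof (cases "even g")
    case True
    then show ?thesis by (auto elim!: evenE)
  next
    case False
    then have "8 dvd g^2 - d^2"
      using odd_square_mod_8[OF False] odd_square_mod_8[OF \<open>odd d\<close>] by presburger
    then have "4 dvd g^2 - d^2" by (rule dvd_trans[rotated]) simp
    then show ?thesis by (rule dvd_mult)
  qed
  then obtain u where u: "g^2 * (g^2 - d^2) = 4 * u" ..
  have "P mod 8 = P * b^2 mod 8"
    using mod_mult_right_eq[of P "b^2" 8] odd_square_mod_8[OF assms(1)] by simp
  also have "\<dots> = d^4 mod 16 mod 8" by (simp add: eq u mod_mod_cancel)
  also have "\<dots> = 1" by (simp add: odd_power_4_mod_16[OF \<open>odd d\<close>])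
  finally show False using P_mod_8 by simp
qed

lemma mod_16_obstruction:
  fixes P s a b :: int
  assumes "odd s" and "odd a" and "odd b" and P_mod_8: "P mod 8 = 3"
  shows "2 * s^2 - 2 * P * a^2 * b^2 \<noteq> P^2 * b^4 - a^4"
proof
  have cong_8: "[x^2 = 1] (mod 8)" if "odd x" for x :: int
    using odd_square_mod_8[OF that] by (simp add: cong_def)
  have cong_16: "[x^4 = 1] (mod 16)" if "odd x" for x :: int
    using odd_power_4_mod_16[OF that] by (simp add: cong_def)
  have "[2 * s^2 = 2 * 1] (mod 2 * 8)"
    using cong_8[OF assms(1)] by (rule cong_cmult_leftI)
  moreover have "[2 * (P * (a * b)^2) = 2 * (P * 1)] (mod 2 * 8)"
    using assms(2,3) by (intro cong_cmult_leftI cong_scalar_left cong_8) simp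
  ultimately have "[2 * s^2 - 2 * (P * (a * b)^2) = 2 - 2 * P] (mod 16)"
    by (simp add: cong_diff)
  moreover assume "2 * s^2 - 2 * P * a^2 * b^2 = P^2 * b^4 - a^4"
  moreover have "[P^2 * b^4 - a^4 = P^2 * 1 - 1] (mod 16)"
    using assms(2,3) by (intro cong_diff cong_scalar_left cong_16)
  ultimately have "[2 - 2 * P = P^2 - 1] (mod 16)"
    by (simp add: power_mult_distrib mult.assoc cong_sym_eq) (meson cong_sym cong_trans)
  then have dvd: "16 dvd (2 - 2 * P) - (P^2 - 1)" by (simp add: cong_iff_dvd_diff)
  obtain j where "P = 8 * j + 3"
    using P_mod_8 by (metis mod_div_mult_eq add.commute mult.commute)
  then have "(2 - 2 * P) - (P^2 - 1) = - (16 * (4 * j^2 + 4 * j) + 12)" by Groebner_Basis.algebra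
  with dvd have "16 dvd 16 * (4 * j^2 + 4 * j) + 12" by (simp only: dvd_minus_iff)
  then have "(16::int) dvd 12" by (metis dvd_add_right_iff dvd_triv_left)
  then show False by simp
qed

section \<open>Coprime factorizations\<close>

lemma coprime_add_mult_iff:
  fixes a b c :: "'a :: ring_gcd"
  shows "coprime a (b + c * a) \<longleftrightarrow> coprime a b"
  using gcd_add_mult[of a c b] by (simp add: coprime_iff_gcd_eq_1 ac_simps)

lemma coprime_diff_mult_iff:
  fixes a b c :: "'a :: ring_gcd"
  shows "coprime a (b - c * a) \<longleftrightarrow> coprime a b"
  using coprime_add_mult_iff[of a b "- c"] by simp

lemma coprime_if_square_eq_square_add:
  fixes w x N :: "'a :: ring_gcd"
  assumes "w^2 = x^2 + N" and "coprime N x"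
  shows "coprime w x"
proof -
  have "coprime x (N + x * x)"
    using assms(2) by (simp add: coprime_add_mult_iff coprime_commute)
  then have "coprime (w^2) x"
    using assms(1) by (simp add: power2_eq_square coprime_commute ac_simps)
  then show ?thesis by simp
qed

lemma coprime_if_coprime_add_diff:
  fixes c d :: "'a :: ring_gcd"
  assumes "coprime (c + d) (d - c)"
  shows "coprime c d"
  by (rule coprimeI) (auto intro: coprime_common_divisor[OF assms])

lemma coprime_diff_add_if_odd:
  fixes w x :: int
  assumes "coprime w x" and "odd (w + x)"
  shows "coprime (w - x) (w + x)"
proof (rule coprimeI)
  fix c assume c: "c dvd w - x" "c dvd w + x"
  then have "odd c" using assms(2) by (meson dvd_trans)
  then have "coprime c 2" by (simp add: coprime_commute)
  moreover have "c dvd 2 * w" "c dvd 2 * x"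
    using dvd_add[OF c] dvd_diff[OF c(2) c(1)] by (simp_all add: algebra_simps)
  ultimately have "c dvd w" "c dvd x" by (simp_all add: coprime_dvd_mult_right_iff)
  then show "is_unit c" by (rule coprime_common_divisor[OF assms(1)])
qed

lemma odd_halves:
  fixes w x :: int
  assumes "odd w" and "odd x" and "\<bar>x\<bar> < w" and "coprime w x"
  obtains c d where "c > 0" and "d > 0" and "coprime c d" and "w = c + d" and "x = d - c"
proof -
  have "even (w - x)" and "even (w + x)" using assms(1,2) by simp_all
  then obtain c d where c: "w - x = 2 * c" and d: "w + x = 2 * d" by (elim evenE)
  have "w = c + d" "x = d - c" using c d by linarith+
  moreover have "c > 0" "d > 0" using c d assms(3) by (simp_all add: abs_less_iff)
  moreover have "coprime c d"
    by (rule coprime_if_coprime_add_diff) (use assms(4) in \<open>simp add: \<open>w = c + d\<close> \<open>x = d - c\<close>\<close>)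
  ultimately show ?thesis using that by blast
qed

lemma odd_square_eq_square_add_8_mult:
  fixes W s N :: int
  assumes "odd W" and "odd s" and "coprime N s" and "W > 0" and "N > 0"
    and W2: "W^2 = s^2 + 8 * N"
  obtains C D where "C > 0" and "D > 0" and "coprime (2 * C) D" and "C * D = N" and "W = 2 * C + D"
proof -
  have "coprime (2^3) s" using assms(2) by (simp only: coprime_power_left_iff) simp
  with assms(3) have "coprime (8 * N) s" by simp
  with W2 have "coprime W s" by (rule coprime_if_square_eq_square_add)
  have "\<bar>s\<bar> < W"
    using abs_le_square_iff[of W s] assms(4,5) W2 by auto
  with assms(1,2) obtain c d where cd: "c > 0" "d > 0" "coprime c d" "W = c + d" "s = d - c"
    using \<open>coprime W s\<close> by (rule odd_halves)
  have "4 * (c * d) = 4 * (2 * N)"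
    using W2 unfolding cd(4,5) by Groebner_Basis.algebra
  then have cd_eq: "c * d = 2 * N" by simp
  show ?thesis
  proof (cases "even c")
    case True
    then obtain C where "c = 2 * C" ..
    with cd cd_eq show ?thesis by (intro that[of C d]) auto
  next
    case False
    then have "even d" using assms(1) cd(4) by simp
    then obtain C where "d = 2 * C" ..
    with cd cd_eq show ?thesis by (intro that[of C c]) (auto simp: coprime_commute)
  qed
qed

lemma prime_power_dvd_mult_coprime:
  fixes q :: "'a :: factorial_semiring_gcd"
  assumes "prime q" and "coprime a b" and "q ^ k dvd a * b"
  shows "q ^ k dvd a \<or> q ^ k dvd b"
proof (cases "q dvd b")
  case True
  then have "\<not> q dvd a"
    using assms(1,2) coprime_common_divisor not_prime_unit by blast
  then have "coprime (q ^ k) a" using assms(1) by (simp add: prime_imp_coprime)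
  then show ?thesis using assms(3) by (simp add: coprime_dvd_mult_right_iff)
next
  case False
  then have "coprime (q ^ k) b" using assms(1) by (simp add: prime_imp_coprime)
  then show ?thesis using assms(3) by (simp add: coprime_dvd_mult_left_iff)
qed

lemma coprime_mult_eq_prime_power_mult:
  fixes q :: "'a :: {factorial_semiring_gcd, idom}"
  assumes "prime q" and "coprime a b" and "a * b = q ^ k * n"
  obtains a' where "a = q ^ k * a'" and "a' * b = n"
    | b' where "b = q ^ k * b'" and "a * b' = n"
proof -
  have "q \<noteq> 0" using assms(1) by auto
  have "q ^ k dvd a \<or> q ^ k dvd b"
    using assms by (intro prime_power_dvd_mult_coprime) simp_all
  then show ?thesis
  proof
    assume "q ^ k dvd a"
    then obtain a' where "a = q ^ k * a'" ..
    with assms(3) \<open>q \<noteq> 0\<close> show ?thesis by (intro that(1)[of a']) (simp_all add: ac_simps)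
  next
    assume "q ^ k dvd b"
    then obtain b' where "b = q ^ k * b'" ..
    with assms(3) \<open>q \<noteq> 0\<close> show ?thesis by (intro that(2)[of b']) (simp_all add: ac_simps)
  qed
qed

lemma is_nth_power_mult_coprime_intD:
  fixes a b :: int
  assumes "coprime a b" "is_nth_power n (a * b)" "a > 0" "b > 0"
  shows "is_nth_power n a" "is_nth_power n b"
proof -
  obtain x where x: "a * b = x ^ n" using assms(2) by (auto simp: is_nth_power_def)
  have "nat a * nat b = nat \<bar>x\<bar> ^ n"
    using x assms(3,4) by (metis abs_mult abs_of_pos nat_abs_mult_distrib nat_power_eq power_abs abs_ge_zero)
  then have "is_nth_power n (nat a * nat b)" by auto
  moreover have "coprime (nat a) (nat b)" using assms(1,3,4) by (simp add: coprime_int_iff[symmetric])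
  ultimately have "is_nth_power n (nat a)" "is_nth_power n (nat b)"
    using is_nth_power_mult_coprime_natD assms(3,4) by auto
  then show "is_nth_power n a" "is_nth_power n b"
    using assms(3,4) by (metis is_nth_power_def int_nat_eq of_nat_power less_imp_le)+
qed

lemma coprime_mult_eq_power_4:
  fixes A B t :: int
  assumes "coprime A B" and "A > 0" and "B > 0" and "A * B = t^4"
  obtains a b where "t^2 = a^2 * b^2" and "A = a^4" and "B = b^4"
proof -
  have "is_nth_power 4 (A * B)" using assms(4) by simp
  with assms(1-3) obtain a b where ab: "A = a^4" "B = b^4"
    by (metis is_nth_power_def is_nth_power_mult_coprime_intD)
  then have "(t^2)^2 = (a^2 * b^2)^2"
    using assms(4) by (simp flip: power_mult power_mult_distrib)
  then have "t^2 = a^2 * b^2" by (rule power2_eq_imp_eq) simp_all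
  then show ?thesis using ab by (rule that)
qed

lemma coprime_mult_eq_prime_power_mult_power_4:
  fixes q A B t :: int
  assumes "prime q" and "coprime A B" and "A > 0" and "B > 0" and "A * B = q^k * t^4"
  obtains a b where "t^2 = a^2 * b^2" and "A = q^k * a^4" and "B = b^4"
    | a b where "t^2 = a^2 * b^2" and "A = a^4" and "B = q^k * b^4"
proof -
  have "q^k > 0" using prime_gt_0_int[OF assms(1)] by simp
  from assms(1,2,5) show ?thesis
  proof (cases rule: coprime_mult_eq_prime_power_mult)
    case (1 A')
    have "coprime A' B" using assms(2) 1(1) by simp
    moreover have "A' > 0" using assms(3) 1(1) \<open>q^k > 0\<close> by (metis zero_less_mult_pos)
    ultimately obtain a b where "t^2 = a^2 * b^2" "A' = a^4" "B = b^4"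
      using assms(4) 1(2) by (rule coprime_mult_eq_power_4)
    with 1(1) show ?thesis by (intro that(1)[of a b]) simp_all
  next
    case (2 B')
    have "coprime A B'" using assms(2) 2(1) by simp
    moreover have "B' > 0" using assms(4) 2(1) \<open>q^k > 0\<close> by (metis zero_less_mult_pos)
    ultimately obtain a b where "t^2 = a^2 * b^2" "A = a^4" "B' = b^4"
      using coprime_mult_eq_power_4[of A B' t] assms(3) 2(2) by blast
    with 2(1) show ?thesis by (intro that(2)[of a b]) simp_all
  qed
qed

lemma abs_le_if_square_eq_mult:
  fixes x y z :: int
  assumes "x^2 = y^2 * z^2" and "x \<noteq> 0"
  shows "\<bar>y\<bar> \<le> \<bar>x\<bar>"
proof -
  have "z \<noteq> 0" using assms by auto
  then have "y^2 * 1 \<le> y^2 * z^2" by (intro mult_left_mono) (simp_all add: int_one_le_iff_zero_less)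
  then show ?thesis using assms(1) by (simp add: abs_le_square_iff)
qed

section \<open>Clearing denominators\<close>

lemma rational_root_of_int_is_int:
  fixes x :: "'a :: field_char_0"
  assumes "x \<in> \<rat>" and "x ^ n \<in> \<int>" and "n > 0"
  shows "x \<in> \<int>"
proof -
  have "algebraic_int (x ^ n)" using assms(2) by (auto elim: Ints_cases)
  then have "algebraic_int x"
    by (rule algebraic_int_root[where p = "monom 1 n"])
      (auto simp: poly_monom coeff_monom degree_monom_eq assms(3))
  then show ?thesis using assms(1) by (rule rational_algebraic_int_is_int)
qed

lemma pi4_congruent_integral_point:
  assumes "pi4_congruent n"
  obtains R S M :: int where "R > 0" and "coprime R S"
    and "M^2 = 4 * int n^2 * S^4 - 4 * int n * R^2 * S^2 + 2 * R^4"
proof -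
  from assms obtain a b c :: rat where "b > 0" and ab: "a * b = 2 * of_nat n"
    and c: "c^2 = a^2 + 2 * b^2 - 2 * a * b"
    unfolding pi4_congruent_def by blast
  obtain R S where quot: "quotient_of b = (R, S)" by fastforce
  have "S > 0" "coprime R S" and b: "b = of_int R / of_int S"
    using quotient_of_denom_pos[OF quot] quotient_of_coprime[OF quot] quotient_of_div[OF quot] by auto
  have "R > 0" using \<open>b > 0\<close> \<open>S > 0\<close> b by (simp add: zero_less_divide_iff)
  have bS: "b * of_int S = of_int R" using b \<open>S > 0\<close> by simp
  have aR: "a * of_int R = 2 * of_nat n * of_int S"
    using ab bS by (metis mult.assoc)
  define x where "x = c * of_int R * of_int S"
  have "x^2 = 4 * of_nat n^2 * of_int S^4 - 4 * of_nat n * of_int R^2 * of_int S^2 + 2 * of_int R^4"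
    unfolding x_def using c aR bS by Groebner_Basis.algebra
  then have x2: "x^2 = of_int (4 * int n^2 * S^4 - 4 * int n * R^2 * S^2 + 2 * R^4)" by simp
  moreover have "x \<in> \<rat>" using Rats_of_rat[where 'a = rat, of x] by simp
  ultimately have "x \<in> \<int>" by (intro rational_root_of_int_is_int[of x 2]) auto
  then obtain M where "x = of_int M" by (auto elim: Ints_cases)
  with x2 have "M^2 = 4 * int n^2 * S^4 - 4 * int n * R^2 * S^2 + 2 * R^4"
    by (metis of_int_eq_iff of_int_power)
  with \<open>R > 0\<close> \<open>coprime R S\<close> show ?thesis by (rule that)
qed

lemma integral_point_even:
  fixes P R S M :: int
  assumes M2: "M^2 = 16 * P^2 * S^4 - 8 * P * R^2 * S^2 + 2 * R^4"
  obtains R1 M1 where "R = 2 * R1" and "M1^2 = P^2 * S^4 - 2 * P * R1^2 * S^2 + 2 * R1^4"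
proof -
  have "M^2 = 8 * (2 * P^2 * S^4 - P * R^2 * S^2) + 2 * R^4" using M2 by simp
  then have "even R" by (rule even_if_square_eq_8_mult_add_2_power_4)
  then obtain R1 where R1: "R = 2 * R1" ..
  have "M^2 = 4^2 * (P^2 * S^4 - 2 * P * R1^2 * S^2 + 2 * R1^4)"
    using M2 unfolding R1 by Groebner_Basis.algebra
  then have "4^2 dvd M^2" by (rule dvdI)
  then have "4 dvd M" by (simp only: pow_divides_pow_iff zero_less_numeral)
  then obtain M1 where M: "M = 4 * M1" ..
  have "4^2 * M1^2 = 4^2 * (P^2 * S^4 - 2 * P * R1^2 * S^2 + 2 * R1^4)"
    using M2 unfolding M R1 by Groebner_Basis.algebra
  then have "M1^2 = P^2 * S^4 - 2 * P * R1^2 * S^2 + 2 * R1^4" by simp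
  with R1 show ?thesis by (rule that)
qed

section \<open>Infinite descent\<close>

definition primitive_solution :: "int \<Rightarrow> int \<Rightarrow> int \<Rightarrow> int \<Rightarrow> bool" where
  "primitive_solution P s r z \<longleftrightarrow>
     r \<noteq> 0 \<and> odd s \<and> coprime s r \<and> \<not> P dvd s \<and> z^2 = s^4 - 2 * P * r^2 * s^2 + 2 * P^2 * r^4"

locale prime_3_or_5_mod_8 =
  fixes P :: int
  assumes prime: "prime P" and mod_8: "P mod 8 = 3 \<or> P mod 8 = 5"
begin

lemma odd_P: "odd P"
  using mod_8 by presburger

lemma dvd_if_dvd_square_sub_2_square: "P dvd x^2 - 2 * y^2 \<Longrightarrow> P dvd y"
  by (rule dvd_if_dvd_square_sub_nonres_square[OF prime not_QuadRes_2[OF prime mod_8]])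

lemma dvd_if_dvd_square_add_2_square:
  assumes "P mod 8 = 5" and "P dvd x^2 + 2 * y^2"
  shows "P dvd y"
  using dvd_if_dvd_square_sub_nonres_square[OF prime not_QuadRes_minus_2[OF prime assms(1)],
      where x = x and y = y] assms(2)
  by simp

lemma primitive_solution_pythagorean:
  assumes "primitive_solution P s r z"
  shows "\<bar>z\<bar>^2 = (s^2 - P * r^2)^2 + (P * r^2)^2"
    and "coprime \<bar>z\<bar> (s^2 - P * r^2)"
    and "\<bar>s^2 - P * r^2\<bar> < \<bar>z\<bar>"
proof -
  from assms have "r \<noteq> 0" "coprime s r" "\<not> P dvd s"
    and z2: "z^2 = s^4 - 2 * P * r^2 * s^2 + 2 * P^2 * r^4"
    unfolding primitive_solution_def by auto
  show eq: "\<bar>z\<bar>^2 = (s^2 - P * r^2)^2 + (P * r^2)^2"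
    unfolding power2_abs z2 by Groebner_Basis.algebra
  have "coprime P (s^2 - r^2 * P)"
    using prime_imp_coprime[OF prime \<open>\<not> P dvd s\<close>] by (simp add: coprime_diff_mult_iff)
  moreover have "coprime r (s^2 - (P * r) * r)"
    using \<open>coprime s r\<close> by (simp add: coprime_diff_mult_iff coprime_commute)
  ultimately have "coprime (P * r^2) (s^2 - P * r^2)"
    by (simp add: ac_simps power2_eq_square)
  then have "coprime ((P * r^2)^2) (s^2 - P * r^2)" by simp
  with eq show "coprime \<bar>z\<bar> (s^2 - P * r^2)"
    by (rule coprime_if_square_eq_square_add)
  have "(P * r^2)^2 > 0" using \<open>r \<noteq> 0\<close> prime by auto
  with eq show "\<bar>s^2 - P * r^2\<bar> < \<bar>z\<bar>"
    using abs_le_square_iff[of "\<bar>z\<bar>" "s^2 - P * r^2"] by auto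
qed

lemma double_square_sub_ne_P2b4_sub_a4:
  assumes "odd s" and "odd a" and "odd b" and "\<not> P dvd s"
  shows "2 * s^2 - 2 * P * a^2 * b^2 \<noteq> P^2 * b^4 - a^4"
proof
  assume eq: "2 * s^2 - 2 * P * a^2 * b^2 = P^2 * b^4 - a^4"
  from mod_8 show False
  proof
    \<comment> \<open>-2 is a square modulo P here, so 2-adic information has to decide this case\<close>
    assume "P mod 8 = 3"
    with assms(1-3) eq show False by (auto dest: mod_16_obstruction)
  next
    assume "P mod 8 = 5"
    moreover have "P dvd (a^2)^2 + 2 * s^2"
      using eq by (intro dvdI[of _ P "P * b^4 + 2 * a^2 * b^2"]) Groebner_Basis.algebra
    ultimately have "P dvd s" by (rule dvd_if_dvd_square_add_2_square)
    with assms(4) show False ..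
  qed
qed

lemma primitive_solution_even_r:
  assumes sol: "primitive_solution P s r z"
  shows "even r"
proof (rule ccontr)
  assume "odd r"
  define X w where "X = s^2 - P * r^2" and "w = \<bar>z\<bar>"
  note pyth = primitive_solution_pythagorean[OF sol, folded X_def w_def]
  have "odd s" and "\<not> P dvd s" using sol by (simp_all add: primitive_solution_def)
  have "even X" unfolding X_def using \<open>odd s\<close> \<open>odd r\<close> odd_P by simp
  then have "odd (w^2)" using pyth(1) \<open>odd r\<close> odd_P by simp
  then have "odd w" by simp
  have cop: "coprime (w - X) (w + X)"
    using pyth(2) by (rule coprime_diff_add_if_odd) (use \<open>odd w\<close> \<open>even X\<close> in simp)
  have pos: "w - X > 0" "w + X > 0" using pyth(3) by (simp_all add: abs_less_iff)
  have prod: "(w - X) * (w + X) = P^2 * r^4" using pyth(1) by Groebner_Basis.algebra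
  from prime cop pos prod show False
  proof (cases rule: coprime_mult_eq_prime_power_mult_power_4)
    case (1 a b)
    then have "(b^2)^2 - 2 * s^2 = P * (P * a^4 - 2 * a^2 * b^2)"
      unfolding X_def by Groebner_Basis.algebra
    then have "P dvd (b^2)^2 - 2 * s^2" by (rule dvdI)
    then have "P dvd s" by (rule dvd_if_dvd_square_sub_2_square)
    with \<open>\<not> P dvd s\<close> show False ..
  next
    case (2 a b)
    have "odd (r^2)" using \<open>odd r\<close> by simp
    with 2(1) have "odd a" and "odd b" by simp_all
    moreover have "2 * s^2 - 2 * P * a^2 * b^2 = P^2 * b^4 - a^4"
      using 2 unfolding X_def by Groebner_Basis.algebra
    ultimately show False using double_square_sub_ne_P2b4_sub_a4 \<open>odd s\<close> \<open>\<not> P dvd s\<close> by blast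
  qed
qed

lemma primitive_solution_if_square_add_eq:
  assumes eq: "b^2 + 2 * P * g^2 * d^2 = 2 * P^2 * g^4 + d^4"
    and cop: "coprime (2 * P^2 * g^4) (d^4)" and "g \<noteq> 0"
  shows "primitive_solution P d g b"
proof -
  have "odd d" "coprime d g" using cop \<open>g \<noteq> 0\<close> by (auto simp: coprime_commute)
  moreover have "\<not> P dvd d"
  proof
    assume "P dvd d"
    then have "P dvd d^4" "P dvd 2 * P^2 * g^4" using prime by (simp_all add: prime_dvd_power_iff)
    with cop prime show False by (meson coprime_common_divisor not_prime_unit)
  qed
  moreover have "b^2 = d^4 - 2 * P * g^2 * d^2 + 2 * P^2 * g^4" using eq by Groebner_Basis.algebra
  ultimately show ?thesis using \<open>g \<noteq> 0\<close> by (simp add: primitive_solution_def ac_simps)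
qed

lemma square_eq_b4_sub_4P2a4_factors:
  assumes s2: "s^2 = b^4 - 4 * P^2 * a^4 + 4 * P * a^2 * b^2" and "odd s"
    and cop: "coprime (4 * P^2 * a^4) (b^4)" and "a \<noteq> 0"
  obtains C D where "C > 0" and "D > 0" and "coprime (2 * C) D" and "C * D = P^2 * a^4"
    and "b^2 + 2 * P * a^2 = 2 * C + D"
proof -
  have "odd b" "coprime P b" "coprime a b" using cop \<open>a \<noteq> 0\<close> by auto
  define W where "W = b^2 + 2 * P * a^2"
  have W2: "W^2 = s^2 + 8 * (P^2 * a^4)" unfolding W_def s2 by Groebner_Basis.algebra
  have sP: "s^2 = b^4 + (4 * a^2 * b^2 - 4 * P * a^4) * P"
    and sa: "s^2 = b^4 + (4 * P * a * b^2 - 4 * P^2 * a^3) * a"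
    unfolding s2 by Groebner_Basis.algebra+
  have "coprime P (s^2)"
    unfolding sP using \<open>coprime P b\<close> by (simp only: coprime_add_mult_iff coprime_power_right_iff simp_thms)
  moreover have "coprime a (s^2)"
    unfolding sa using \<open>coprime a b\<close> by (simp only: coprime_add_mult_iff coprime_power_right_iff simp_thms)
  ultimately have "coprime (P^2 * a^4) s" by (simp add: coprime_commute)
  moreover have "odd W" using \<open>odd b\<close> unfolding W_def by simp
  moreover have "b \<noteq> 0" using \<open>odd b\<close> by auto
  then have "W > 0"
    unfolding W_def using prime_gt_0_int[OF prime] by (intro add_pos_nonneg) simp_all
  moreover have "P^2 * a^4 > 0" using \<open>a \<noteq> 0\<close> prime by simp
  ultimately show ?thesis
    using odd_square_eq_square_add_8_mult[OF _ \<open>odd s\<close> _ _ _ W2] that unfolding W_def by blast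
qed

lemma smaller_solution_if_square_eq_b4_sub_4P2a4:
  assumes s2: "s^2 = b^4 - 4 * P^2 * a^4 + 4 * P * a^2 * b^2" and "odd s"
    and cop: "coprime (4 * P^2 * a^4) (b^4)" and "a \<noteq> 0"
  obtains s' r' z' where "primitive_solution P s' r' z'" and "\<bar>r'\<bar> \<le> \<bar>a\<bar>"
proof -
  obtain C D where CD: "C > 0" "D > 0" "coprime (2 * C) D" "C * D = P^2 * a^4"
    "b^2 + 2 * P * a^2 = 2 * C + D"
    using assms by (rule square_eq_b4_sub_4P2a4_factors)
  from CD(3) have "coprime C D" by simp
  from prime this CD(1,2,4) show ?thesis
  proof (cases rule: coprime_mult_eq_prime_power_mult_power_4)
    case (1 g d)
    have "b^2 + 2 * P * g^2 * d^2 = 2 * P^2 * g^4 + d^4"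
      using CD(5) 1 by Groebner_Basis.algebra
    moreover have "coprime (2 * P^2 * g^4) (d^4)" using CD(3) 1 by (simp add: mult.assoc)
    moreover have "g \<noteq> 0" using 1(1) \<open>a \<noteq> 0\<close> by auto
    ultimately have "primitive_solution P d g b" by (rule primitive_solution_if_square_add_eq)
    moreover have "\<bar>g\<bar> \<le> \<bar>a\<bar>" using 1(1) \<open>a \<noteq> 0\<close> by (rule abs_le_if_square_eq_mult)
    ultimately show ?thesis by (rule that)
  next
    case (2 g d)
    have "b^2 - 2 * (g^2)^2 = P * (P * d^4 - 2 * a^2)"
      using CD(5) 2 by Groebner_Basis.algebra
    then have "P dvd b^2 - 2 * (g^2)^2" by (rule dvdI)
    then have "P dvd g^2" by (rule dvd_if_dvd_square_sub_2_square)
    then have "P dvd g" using prime by (simp add: prime_dvd_power_iff)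
    then have "P dvd C" "P dvd D" using 2 prime by (simp_all add: prime_dvd_power_iff)
    with \<open>coprime C D\<close> prime show ?thesis by (meson coprime_common_divisor not_prime_unit)
  qed
qed

lemma square_ne_P2b4_sub_4a4_add_4Pa2b2:
  assumes "odd s" and cop: "coprime (4 * a^4) (P^2 * b^4)" and "a \<noteq> 0"
  shows "s^2 \<noteq> P^2 * b^4 - 4 * a^4 + 4 * P * a^2 * b^2"
proof
  assume s2: "s^2 = P^2 * b^4 - 4 * a^4 + 4 * P * a^2 * b^2"
  have "odd b" "coprime a (P^2 * b^4)" using cop \<open>a \<noteq> 0\<close> by auto
  define W where "W = P * b^2 + 2 * a^2"
  have W2: "W^2 = s^2 + 8 * a^4" unfolding W_def s2 by Groebner_Basis.algebra
  have "s^2 = P^2 * b^4 + (4 * P * a * b^2 - 4 * a^3) * a"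
    unfolding s2 by Groebner_Basis.algebra
  then have "coprime a (s^2)"
    using \<open>coprime a (P^2 * b^4)\<close> by (simp only: coprime_add_mult_iff)
  then have "coprime (a^4) s" by (simp add: coprime_commute)
  moreover have "odd W" using \<open>odd b\<close> odd_P unfolding W_def by simp
  moreover have "W > 0"
    unfolding W_def using prime_gt_0_int[OF prime] \<open>a \<noteq> 0\<close> by (intro add_nonneg_pos) simp_all
  moreover have "a^4 > 0" using \<open>a \<noteq> 0\<close> by simp
  ultimately obtain C D where CD: "C > 0" "D > 0" "coprime (2 * C) D" "C * D = a^4" "W = 2 * C + D"
    using odd_square_eq_square_add_8_mult[OF _ \<open>odd s\<close> _ _ _ W2] by blast
  from CD(3) have "coprime C D" by simp
  then obtain g d where "a^2 = g^2 * d^2" "C = g^4" "D = d^4"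
    using CD(1,2,4) by (rule coprime_mult_eq_power_4)
  with CD(5) have "P * b^2 + 2 * g^2 * d^2 = 2 * g^4 + d^4" unfolding W_def by simp
  with mod_8_obstruction[OF \<open>odd b\<close> mod_8] show False by blast
qed

lemma primitive_solution_even_r_factors:
  assumes sol: "primitive_solution P s r z" and r: "r = 2 * t"
  obtains c d where "c > 0" and "d > 0" and "coprime (4 * c) d" and "c * d = P^2 * t^4"
    and "s^2 = d - 4 * c + 4 * P * t^2"
proof -
  define X w where "X = s^2 - P * r^2" and "w = \<bar>z\<bar>"
  note pyth = primitive_solution_pythagorean[OF sol, folded X_def w_def]
  have "odd s" using sol by (simp add: primitive_solution_def)
  then have "odd X" unfolding X_def r by simp
  then have "odd (w^2)" using pyth(1) unfolding r by (simp add: power_mult_distrib)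
  then have "odd w" by simp
  obtain c d where cd: "c > 0" "d > 0" "coprime c d" "w = c + d" "X = d - c"
    using \<open>odd w\<close> \<open>odd X\<close> pyth(3) pyth(2) by (rule odd_halves)
  have "4 * (c * d) = 4 * (2^2 * (P^2 * t^4))"
    using pyth(1) unfolding cd(4,5) r by Groebner_Basis.algebra
  then have cd_eq: "c * d = 2^2 * (P^2 * t^4)" by simp
  have s2: "s^2 = d - c + 4 * P * t^2" using cd(5) unfolding X_def r by Groebner_Basis.algebra
  from two_is_prime cd(3) cd_eq show ?thesis
  proof (cases rule: coprime_mult_eq_prime_power_mult)
    case (1 c')
    with cd(1-3) s2 show ?thesis by (intro that[of c' d]) simp_all
  next
    case (2 d')
    with cd(1-3) have "coprime c d'" "d' > 0" by simp_all
    from prime this(1) cd(1) this(2) 2(2) obtain y where "c = y^2"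
    proof (cases rule: coprime_mult_eq_prime_power_mult_power_4)
      case (1 a b)
      then show ?thesis by (intro that[of "P * a^2"]) (simp add: power_mult_distrib flip: power_mult)
    next
      case (2 a b)
      then show ?thesis by (intro that[of "a^2"]) (simp flip: power_mult)
    qed
    with s2 2(1) have "s^2 + y^2 = 4 * (d' + P * t^2)" by simp
    with not_4_dvd_odd_square_add_square[OF \<open>odd s\<close>] show ?thesis by (metis dvd_triv_left)
  qed
qed

lemma primitive_solution_descent:
  assumes sol: "primitive_solution P s r z"
  obtains s' r' z' where "primitive_solution P s' r' z'" and "\<bar>r'\<bar> < \<bar>r\<bar>"
proof -
  obtain t where r: "r = 2 * t" using primitive_solution_even_r[OF sol] ..
  have "odd s" "t \<noteq> 0" using sol r by (simp_all add: primitive_solution_def)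
  obtain c d where cd: "c > 0" "d > 0" "coprime (4 * c) d" "c * d = P^2 * t^4"
    and s2: "s^2 = d - 4 * c + 4 * P * t^2"
    using sol r by (rule primitive_solution_even_r_factors)
  from cd(3) have "coprime c d" by simp
  from prime this cd(1,2,4) show ?thesis
  proof (cases rule: coprime_mult_eq_prime_power_mult_power_4)
    case (1 a b)
    have "a \<noteq> 0" using 1(1) \<open>t \<noteq> 0\<close> by auto
    have "s^2 = b^4 - 4 * P^2 * a^4 + 4 * P * a^2 * b^2"
      using s2 1 by Groebner_Basis.algebra
    moreover have "coprime (4 * P^2 * a^4) (b^4)" using cd(3) 1 by (simp add: mult.assoc)
    ultimately obtain s' r' z' where "primitive_solution P s' r' z'" "\<bar>r'\<bar> \<le> \<bar>a\<bar>"
      using \<open>odd s\<close> \<open>a \<noteq> 0\<close> by (auto elim: smaller_solution_if_square_eq_b4_sub_4P2a4)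
    moreover have "\<bar>a\<bar> \<le> \<bar>t\<bar>" using 1(1) \<open>t \<noteq> 0\<close> by (rule abs_le_if_square_eq_mult)
    moreover have "\<bar>t\<bar> < \<bar>r\<bar>" unfolding r using \<open>t \<noteq> 0\<close> by (simp add: abs_mult)
    ultimately show ?thesis by (intro that[of s' r' z']) auto
  next
    case (2 a b)
    have "a \<noteq> 0" using 2(1) \<open>t \<noteq> 0\<close> by auto
    have "s^2 = P^2 * b^4 - 4 * a^4 + 4 * P * a^2 * b^2"
      using s2 2 by Groebner_Basis.algebra
    moreover have "coprime (4 * a^4) (P^2 * b^4)" using cd(3) 2 by simp
    ultimately show ?thesis using square_ne_P2b4_sub_4a4_add_4Pa2b2 \<open>odd s\<close> \<open>a \<noteq> 0\<close> by blast
  qed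
qed

lemma no_primitive_solution: "\<not> primitive_solution P s r z"
proof (induction "nat \<bar>r\<bar>" arbitrary: s r z rule: less_induct)
  case less
  show ?case
  proof
    assume "primitive_solution P s r z"
    then obtain s' r' z' where "primitive_solution P s' r' z'" "\<bar>r'\<bar> < \<bar>r\<bar>"
      by (rule primitive_solution_descent)
    with less show False by (metis abs_ge_zero nat_less_eq_zless)
  qed
qed

lemma primitive_solution_if_integral_point:
  assumes "R > 0" and "coprime R S"
    and M2: "M^2 = 16 * P^2 * S^4 - 8 * P * R^2 * S^2 + 2 * R^4"
  obtains s r z where "primitive_solution P s r z"
proof -
  from M2 obtain R1 M1 where R1: "R = 2 * R1"
    and M1: "M1^2 = P^2 * S^4 - 2 * P * R1^2 * S^2 + 2 * R1^4"
    by (rule integral_point_even)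
  then have "M1^2 - 2 * (R1^2)^2 = P * (P * S^4 - 2 * R1^2 * S^2)" by Groebner_Basis.algebra
  then have "P dvd M1^2 - 2 * (R1^2)^2" by (rule dvdI)
  then have "P dvd R1^2" by (rule dvd_if_dvd_square_sub_2_square)
  then have "P dvd R1" using prime by (simp add: prime_dvd_power_iff)
  then obtain r where R1_r: "R1 = P * r" ..
  have "M1^2 = P^2 * (S^4 - 2 * P * r^2 * S^2 + 2 * P^2 * r^4)"
    using M1 unfolding R1_r by Groebner_Basis.algebra
  then have "P^2 dvd M1^2" by (rule dvdI)
  then have "P dvd M1" by (simp only: pow_divides_pow_iff zero_less_numeral)
  then obtain z where M1_z: "M1 = P * z" ..
  have "P^2 * z^2 = P^2 * (S^4 - 2 * P * r^2 * S^2 + 2 * P^2 * r^4)"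
    using M1 unfolding M1_z R1_r by Groebner_Basis.algebra
  then have "z^2 = S^4 - 2 * P * r^2 * S^2 + 2 * P^2 * r^4" using prime by simp
  moreover have "r \<noteq> 0" using \<open>R > 0\<close> unfolding R1 R1_r by auto
  moreover have "odd S" "coprime P S" "coprime r S"
    using \<open>coprime R S\<close> unfolding R1 R1_r by simp_all
  moreover have "\<not> P dvd S"
    using \<open>coprime P S\<close> prime by (auto simp: coprime_absorb_left)
  ultimately have "primitive_solution P S r z"
    by (simp add: primitive_solution_def coprime_commute)
  then show ?thesis by (rule that)
qed

end

theorem corollary3p3:
  fixes p :: nat
  assumes "prime p" and "p mod 8 = 3 \<or> p mod 8 = 5"
  shows "\<not> pi4_congruent (2 * p)"
proof
  assume "pi4_congruent (2 * p)"
  then obtain R S M where "R > 0" and "coprime R S"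
    and "M^2 = 4 * int (2 * p)^2 * S^4 - 4 * int (2 * p) * R^2 * S^2 + 2 * R^4"
    by (rule pi4_congruent_integral_point)
  then have M2: "M^2 = 16 * int p^2 * S^4 - 8 * int p * R^2 * S^2 + 2 * R^4" by simp
  interpret prime_3_or_5_mod_8 "int p"
    using assms by unfold_locales (simp, metis of_nat_mod of_nat_numeral)
  obtain s r z where "primitive_solution (int p) s r z"
    using \<open>R > 0\<close> \<open>coprime R S\<close> M2 by (rule primitive_solution_if_integral_point)
  with no_primitive_solution show False by blast
qed

end
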